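(* Let $R$ be a ring and $I,J$ ideals of $R$ with $I\cap J=0$. Then $[I]\cap[J]\subseteq\mathrm{Nil}_2(R)$.
   Context: Rings are commutative with unit. $\widehat\Theta(R)$ is the free monoid on $\mathrm{Der}(R)$, acting on $R$ by composition of derivations. For an ideal $I$, $[I]:=\sum_{\theta\in\widehat\Theta(R)}\theta(I)$, the smallest ideal containing $I$ stable under all derivations of $R$. $\mathrm{Nil}_2(R):=\{x\in R: x^2=0\}$. *)

theory Defs
  imports Main
begin

definition is_ideal :: "'a::comm_ring_1 set \<Rightarrow> bool" where
  "is_ideal I \<longleftrightarrow> 0 \<in> I \<and> (\<forall>x\<in>I. \<forall>y\<in>I. x + y \<in> I) \<and> (\<forall>x\<in>I. - x \<in> I)
      \<and> (\<forall>r x. x \<in> I \<longrightarrow> r * x \<in> I)"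

definition Der :: "('a::comm_ring_1 \<Rightarrow> 'a) set" where
  "Der = {D. (\<forall>x y. D (x + y) = D x + D y) \<and> (\<forall>x y. D (x * y) = x * D y + D x * y)}"

text \<open>Elements of the free monoid on Der(R) are words (lists) of derivations;
  a word acts on R by composition of its letters (the empty word acts as identity).\<close>
definition word_action :: "('a \<Rightarrow> 'a) list \<Rightarrow> 'a \<Rightarrow> 'a" where
  "word_action ds = foldr (\<circ>) ds id"

definition Theta_hat :: "('a::comm_ring_1 \<Rightarrow> 'a) list set" where
  "Theta_hat = {ds. set ds \<subseteq> Der}"

text \<open>[I] = sum over all theta in Theta_hat of theta(I): the set of finite sums of
  elements theta(x) with theta a word in derivations and x in I.\<close>
inductive_set bracket :: "'a::comm_ring_1 set \<Rightarrow> 'a set" for I where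
  zero: "0 \<in> bracket I"
| gen: "\<theta> \<in> Theta_hat \<Longrightarrow> x \<in> I \<Longrightarrow> word_action \<theta> x \<in> bracket I"
| add: "a \<in> bracket I \<Longrightarrow> b \<in> bracket I \<Longrightarrow> a + b \<in> bracket I"

definition Nil2 :: "'a::comm_ring_1 set" where
  "Nil2 = {x. x ^ 2 = 0}"

end

theory Submission
  imports Defs
begin

text \<open>For \<open>x \<in> I\<close>, \<open>y \<in> J\<close> and words \<open>\<theta>, \<phi>\<close> of derivations one shows \<open>\<theta>(x) \<phi>(y) = 0\<close> by
  induction on the total length of the words. If all shorter such products vanish, the Leibniz
  rule \<open>D(a) b = - a D(b)\<close> (valid whenever \<open>a b = 0\<close>) moves the letters of \<open>\<theta>\<close> one by one over
  to \<open>\<phi>\<close>, so \<open>\<theta>(x) \<phi>(y) = \<plusminus>x \<theta>'(y) \<in> I\<close>; symmetrically it lies in \<open>J\<close>, hence it is \<open>0\<close>.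
  By additivity \<open>[I] [J] = 0\<close>, so every \<open>z \<in> [I] \<inter> [J]\<close> satisfies \<open>z\<^sup>2 = 0\<close>.\<close>

lemma word_action_Nil [simp]: "word_action [] x = x"
  by (simp add: word_action_def)

lemma word_action_Cons [simp]: "word_action (D # ds) x = D (word_action ds x)"
  by (simp add: word_action_def)

lemma Theta_hat_Cons_iff [simp]: "D # ds \<in> Theta_hat \<longleftrightarrow> D \<in> Der \<and> ds \<in> Theta_hat"
  by (simp add: Theta_hat_def)

lemma is_ideal_mult_right: "is_ideal K \<Longrightarrow> x \<in> K \<Longrightarrow> x * r \<in> K"
  unfolding is_ideal_def by (metis mult.commute)

lemma is_ideal_uminus: "is_ideal K \<Longrightarrow> x \<in> K \<Longrightarrow> - x \<in> K"
  unfolding is_ideal_def by blast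

lemma Der_zero: "D \<in> Der \<Longrightarrow> D 0 = 0"
proof -
  assume "D \<in> Der"
  then have "D (0 + 0) = D 0 + D 0" unfolding Der_def by blast
  then show ?thesis by simp
qed

lemma Der_mult_eq_0_swap:
  assumes "D \<in> Der" and "a * b = 0"
  shows "D a * b = - (a * D b)"
proof -
  have "D (a * b) = a * D b + D a * b"
    using \<open>D \<in> Der\<close> by (simp add: Der_def)
  with assms show ?thesis
    by (simp add: Der_zero eq_neg_iff_add_eq_0 add.commute)
qed

lemma word_action_mult_mem_ideal:
  fixes x y :: "'a::comm_ring_1"
  assumes K: "is_ideal K" and "x \<in> K"
    and shorter_vanish: "\<And>\<theta>' \<phi>'. \<theta>' \<in> Theta_hat \<Longrightarrow> \<phi>' \<in> Theta_hat \<Longrightarrow>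
          length \<theta>' + length \<phi>' < n \<Longrightarrow> word_action \<theta>' x * word_action \<phi>' y = 0"
  shows "\<theta> \<in> Theta_hat \<Longrightarrow> \<phi> \<in> Theta_hat \<Longrightarrow> length \<theta> + length \<phi> = n \<Longrightarrow>
         word_action \<theta> x * word_action \<phi> y \<in> K"
proof (induction \<theta> arbitrary: \<phi>)
  case Nil
  then show ?case using is_ideal_mult_right[OF K \<open>x \<in> K\<close>] by simp
next
  case (Cons D \<theta>)
  let ?a = "word_action \<theta> x" and ?b = "word_action \<phi> y"
  have "?a * ?b = 0"
    using shorter_vanish Cons.prems by simp
  then have swap: "D ?a * ?b = - (?a * D ?b)"
    using Cons.prems by (simp add: Der_mult_eq_0_swap)
  have "?a * word_action (D # \<phi>) y \<in> K"
    using Cons.prems by (intro Cons.IH) auto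
  then show ?case
    using swap is_ideal_uminus[OF K] by simp
qed

lemma word_action_mult_word_action_eq_0:
  fixes x y :: "'a::comm_ring_1"
  assumes I: "is_ideal I" and J: "is_ideal J" and "I \<inter> J = {0}"
    and "x \<in> I" and "y \<in> J" and "\<theta> \<in> Theta_hat" and "\<phi> \<in> Theta_hat"
  shows "word_action \<theta> x * word_action \<phi> y = 0"
  using \<open>\<theta> \<in> Theta_hat\<close> \<open>\<phi> \<in> Theta_hat\<close>
proof (induction "length \<theta> + length \<phi>" arbitrary: \<theta> \<phi> rule: less_induct)
  case less
  have "word_action \<theta> x * word_action \<phi> y \<in> I"
    using less by (intro word_action_mult_mem_ideal[OF I \<open>x \<in> I\<close>]) auto
  moreover have "word_action \<phi> y * word_action \<theta> x \<in> J"
  proof (rule word_action_mult_mem_ideal[OF J \<open>y \<in> J\<close>])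
    fix \<phi>' \<theta>' :: "('a \<Rightarrow> 'a) list"
    assume "\<phi>' \<in> Theta_hat" "\<theta>' \<in> Theta_hat" "length \<phi>' + length \<theta>' < length \<phi> + length \<theta>"
    then have "word_action \<theta>' x * word_action \<phi>' y = 0"
      using less.hyps by (simp add: add.commute)
    then show "word_action \<phi>' y * word_action \<theta>' x = 0"
      by (simp add: mult.commute)
  qed (use less.prems in simp_all)
  ultimately show ?case
    using \<open>I \<inter> J = {0}\<close> by (auto simp: mult.commute)
qed

lemma bracket_mult_bracket_eq_0:
  fixes a b :: "'a::comm_ring_1"
  assumes "is_ideal I" and "is_ideal J" and "I \<inter> J = {0}"
    and "a \<in> bracket I" and "b \<in> bracket J"
  shows "a * b = 0"
  using \<open>a \<in> bracket I\<close>
proof induction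
  case (gen \<theta> x)
  from \<open>b \<in> bracket J\<close> show ?case
  proof induction
    case (gen \<phi> y)
    with assms(1-3) \<open>\<theta> \<in> Theta_hat\<close> \<open>x \<in> I\<close> show ?case
      by (simp add: word_action_mult_word_action_eq_0)
  qed (simp_all add: distrib_left)
qed (simp_all add: distrib_right)

theorem corollaryA16:
  fixes I J :: "'a::comm_ring_1 set"
  assumes "is_ideal I" and "is_ideal J" and "I \<inter> J = {0}"
  shows "bracket I \<inter> bracket J \<subseteq> Nil2"
proof
  fix z assume "z \<in> bracket I \<inter> bracket J"
  then have "z * z = 0" using bracket_mult_bracket_eq_0[OF assms] by blast
  then show "z \<in> Nil2" by (simp add: Nil2_def power2_eq_square)
qed

end
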